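(* Let $m\in\mathbb{Z}_{>0}\cup\{\infty\}$ and $n\ge 1$. Let $\tilde W$ be the subalgebra of $H(m,1,n)$ generated by $\tau,\tau^{-1},\sigma_1,\dots,\sigma_{n-2}$. Then every $x\in H(m,1,n)$ is an $\mathcal{A}_m$-linear combination of elements of the form $$\sigma_j^{-1}\sigma_{j-1}^{-1}\cdots\sigma_1^{-1}\,\tau^{\alpha}\,\sigma_1\sigma_2\cdots\sigma_{n-1}\,w,\qquad j\in\{0,\dots,n-1\},\ \alpha\in\mathfrak{E}_m,\ w\in\tilde W$$ (empty products equal $1$).
   Context: $q,v_1,\dots,v_m$ are indeterminates; $\mathcal{A}_m:=\mathbb{C}[q^{\pm1},v_1^{\pm1},\dots,v_m^{\pm1}]$ for finite $m$ and $\mathcal{A}_\infty:=\mathbb{C}[q,q^{-1}]$. $\mathfrak{E}_m:=\{0,\dots,m-1\}$ for finite $m$, $\mathfrak{E}_\infty:=\mathbb{Z}$. The algebra $H(m,1,n)$ is the associative $\mathcal{A}_m$-algebra generated by $\tau,\tau^{-1},\sigma_1,\dots,\sigma_{n-1}$ (with $\tau\tau^{-1}=\tau^{-1}\tau=1$) subject to: $\sigma_i\sigma_{i+1}\sigma_i=\sigma_{i+1}\sigma_i\sigma_{i+1}$ ($1\le i\le n-2$); $\sigma_i\sigma_j=\sigma_j\sigma_i$ for $|i-j|>1$; $\tau\sigma_1\tau\sigma_1=\sigma_1\tau\sigma_1\tau$; $\tau\sigma_i=\sigma_i\tau$ for $i>1$; $\sigma_i^2=(q-q^{-1})\sigma_i+1$;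 and, if $m<\infty$, $(\tau-v_1)\cdots(\tau-v_m)=0$. (For $m=\infty$ this is the affine Hecke algebra of type GL.) *)

theory Defs
  imports "HOL-Library.Poly_Mapping" "HOL-Library.Extended_Nat"
begin

text \<open>Laurent polynomials over the complex numbers in the countably many indeterminates
  x_0, x_1, x_2, ...: a polynomial is a finitely supported map from exponent vectors
  (finitely supported nat to int maps) to coefficients.  We use x_0 = q and x_i = v_i.\<close>

type_synonym laurent = "(nat \<Rightarrow>\<^sub>0 int) \<Rightarrow>\<^sub>0 complex"

definition lvar :: "nat \<Rightarrow> laurent" where
  "lvar i = Poly_Mapping.single (Poly_Mapping.single i 1) 1"

definition lvar_inv :: "nat \<Rightarrow> laurent" where
  "lvar_inv i = Poly_Mapping.single (Poly_Mapping.single i (-1)) 1"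

abbreviation qq :: laurent where "qq \<equiv> lvar 0"
abbreviation qq_inv :: laurent where "qq_inv \<equiv> lvar_inv 0"

text \<open>The coefficient ring A_m: Laurent polynomials in q, v_1..v_m (m finite) or in q only
  (m = infinity).\<close>

definition coeffA :: "enat \<Rightarrow> laurent set" where
  "coeffA m = {p :: laurent. \<forall>\<mu> \<in> Poly_Mapping.keys p. \<forall>i \<in> Poly_Mapping.keys \<mu>. i = 0 \<or> (m \<noteq> \<infinity> \<and> enat i \<le> m)}"

definition expE :: "enat \<Rightarrow> int set" where
  "expE m = (if m = \<infinity> then UNIV else {0..<int (the_enat m)})"

text \<open>Two-sided inverse in a ring (meaningful when it exists and is unique).\<close>

definition ring_inv :: "'r::ring_1 \<Rightarrow> 'r" where
  "ring_inv x = (THE y. x * y = 1 \<and> y * x = 1)"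

definition zpow :: "'r::ring_1 \<Rightarrow> 'r \<Rightarrow> int \<Rightarrow> 'r" where
  "zpow t ti a = (if a \<ge> 0 then t ^ nat a else ti ^ nat (- a))"

inductive_set alg_gen :: "(laurent \<Rightarrow> 'r::ring_1) \<Rightarrow> laurent set \<Rightarrow> 'r set \<Rightarrow> 'r set"
  for \<phi> :: "laurent \<Rightarrow> 'r" and A :: "laurent set" and G :: "'r set" where
  scal: "a \<in> A \<Longrightarrow> \<phi> a \<in> alg_gen \<phi> A G"
| gen: "g \<in> G \<Longrightarrow> g \<in> alg_gen \<phi> A G"
| add: "x \<in> alg_gen \<phi> A G \<Longrightarrow> y \<in> alg_gen \<phi> A G \<Longrightarrow> x + y \<in> alg_gen \<phi> A G"
| mult: "x \<in> alg_gen \<phi> A G \<Longrightarrow> y \<in> alg_gen \<phi> A G \<Longrightarrow> x * y \<in> alg_gen \<phi> A G"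

definition lin_span :: "(laurent \<Rightarrow> 'r::ring_1) \<Rightarrow> laurent set \<Rightarrow> 'r set \<Rightarrow> 'r set" where
  "lin_span \<phi> A B = {x. \<exists>(k::nat) c b. (\<forall>i<k. c i \<in> A \<and> b i \<in> B) \<and> x = (\<Sum>i<k. \<phi> (c i) * b i)}"

text \<open>The algebra H(m,1,n) itself is such an R, and every such R is a
  quotient of H(m,1,n).\<close>

definition is_H :: "enat \<Rightarrow> nat \<Rightarrow> (laurent \<Rightarrow> 'r::ring_1) \<Rightarrow> 'r \<Rightarrow> 'r \<Rightarrow> (nat \<Rightarrow> 'r) \<Rightarrow> bool" where
  "is_H m n \<phi> t ti s \<longleftrightarrow>
     (\<forall>a\<in>coeffA m. \<forall>b\<in>coeffA m. \<phi> (a + b) = \<phi> a + \<phi> b \<and> \<phi> (a * b) = \<phi> a * \<phi> b) \<and>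
     \<phi> 1 = 1 \<and>
     (\<forall>a\<in>coeffA m. \<forall>x. \<phi> a * x = x * \<phi> a) \<and>
     t * ti = 1 \<and> ti * t = 1 \<and>
     (\<forall>i. 1 \<le> i \<and> i \<le> n - 2 \<longrightarrow> s i * s (i+1) * s i = s (i+1) * s i * s (i+1)) \<and>
     (\<forall>i j. 1 \<le> i \<and> i \<le> n - 1 \<and> 1 \<le> j \<and> j \<le> n - 1 \<and> (i + 1 < j \<or> j + 1 < i)
        \<longrightarrow> s i * s j = s j * s i) \<and>
     (n \<ge> 2 \<longrightarrow> t * s 1 * t * s 1 = s 1 * t * s 1 * t) \<and>
     (\<forall>i. 2 \<le> i \<and> i \<le> n - 1 \<longrightarrow> t * s i = s i * t) \<and>
     (\<forall>i. 1 \<le> i \<and> i \<le> n - 1 \<longrightarrow> s i * s i = \<phi> (qq - qq_inv) * s i + 1) \<and>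
     (m \<noteq> \<infinity> \<longrightarrow> prod_list (map (\<lambda>i. t - \<phi> (lvar i)) [1..<the_enat m + 1]) = 0) \<and>
     alg_gen \<phi> (coeffA m) ({t, ti} \<union> s ` {1..<n}) = UNIV"

end

theory Submission
  imports Defs
begin

text \<open>Write c = s_1 \<cdots> s_(n-1), c_k = s_k \<cdots> s_(n-1) and M_a = c\<inverse> t^a c (cox, tail k and
  tconj a below).  Since c\<inverse> s_(i+1) = s_i c\<inverse> by the braid relations and t commutes with
  s_(i+1), each M_a commutes with s_1, ..., s_(n-2).  The span of the elements c_k M_a w
  (1 \<le> k \<le> n, w in the subalgebra Wtilde generated by t, t\<inverse>, s_1, ..., s_(n-2)) contains
  1 = c_n M_0 and is stable under left multiplication by the generators: by s_i through the
  braid and quadratic relations, and by t and t\<inverse> because the relation t s_1 t s_1 = s_1 t s_1 t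
  makes s_1\<inverse> t^a s_1 commute with t up to terms that again lie in the span.  Hence it is the
  whole algebra.  Finally c_k M_a = s_(k-1)\<inverse> \<cdots> s_1\<inverse> t^a c, and for finite m the monic
  relation (t - v_1) \<cdots> (t - v_m) = 0, whose constant term is a unit, expresses every t^a
  through t^0, ..., t^(m-1).\<close>

section \<open>The coefficient ring\<close>

lemma coeffA_add: "p \<in> coeffA m \<Longrightarrow> q \<in> coeffA m \<Longrightarrow> p + q \<in> coeffA m"
  unfolding coeffA_def using keys_add[of p q] by blast

lemma coeffA_mult:
  assumes "p \<in> coeffA m" and "q \<in> coeffA m"
  shows "p * q \<in> coeffA m"
  unfolding coeffA_def
proof (intro CollectI ballI)
  fix \<mu> i assume \<mu>: "\<mu> \<in> Poly_Mapping.keys (p * q)" and i: "i \<in> Poly_Mapping.keys \<mu>"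
  obtain a b where ab: "\<mu> = a + b" "a \<in> Poly_Mapping.keys p" "b \<in> Poly_Mapping.keys q"
    using keys_mult[of p q] \<mu> by blast
  have "i \<in> Poly_Mapping.keys a \<union> Poly_Mapping.keys b"
    using i keys_add[of a b] ab(1) by blast
  with ab show "i = 0 \<or> (m \<noteq> \<infinity> \<and> enat i \<le> m)"
    using assms unfolding coeffA_def by blast
qed

lemma coeffA_uminus: "p \<in> coeffA m \<Longrightarrow> - p \<in> coeffA m"
  unfolding coeffA_def by simp

lemma coeffA_one: "1 \<in> coeffA m"
  unfolding coeffA_def by simp

lemma coeffA_lvar: "i = 0 \<or> (m \<noteq> \<infinity> \<and> enat i \<le> m) \<Longrightarrow> lvar i \<in> coeffA m"
  unfolding coeffA_def lvar_def by simp

lemma coeffA_lvar_inv: "i = 0 \<or> (m \<noteq> \<infinity> \<and> enat i \<le> m) \<Longrightarrow> lvar_inv i \<in> coeffA m"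
  unfolding coeffA_def lvar_inv_def by simp

lemma lvar_mult_lvar_inv: "lvar i * lvar_inv i = 1"
proof -
  have "Poly_Mapping.single i (1::int) + Poly_Mapping.single i (-1) = 0"
    by (simp flip: single_add)
  then show ?thesis unfolding lvar_def lvar_inv_def by (simp add: mult_single)
qed

lemma prod_uminus_lvar_inverse:
  "prod_list (map uminus (map lvar L)) * prod_list (map uminus (map lvar_inv L)) = 1"
proof (induction L)
  case (Cons x L)
  have regroup: "\<And>a p b q :: laurent. a * p * (b * q) = (a * b) * (p * q)" by (simp add: mult_ac)
  show ?case using Cons lvar_mult_lvar_inv[of x] by (simp add: regroup)
qed simp

section \<open>Inverses, commuting products and integer powers\<close>

lemma ring_inv_eqI:
  fixes x y :: "'r::ring_1"
  assumes "x * y = 1" and "y * x = 1"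
  shows "ring_inv x = y"
  unfolding ring_inv_def
proof (rule the_equality)
  fix z assume "x * z = 1 \<and> z * x = 1"
  then have "y * (x * z) = y" by simp
  then show "z = y" using assms(2) by (simp add: mult.assoc[symmetric])
qed (use assms in simp)

lemma inverse_of_quadratic:
  fixes x f :: "'r::ring_1"
  assumes "x * x = f * x + 1" and "f * x = x * f"
  shows "x * (x - f) = 1" and "(x - f) * x = 1"
  using assms by (simp_all add: right_diff_distrib left_diff_distrib)

lemma prod_list_commute:
  fixes x :: "'r::monoid_mult"
  assumes "\<forall>y\<in>set ys. x * y = y * x"
  shows "x * prod_list ys = prod_list ys * x"
  using assms
proof (induction ys)
  case (Cons y ys)
  have "x * prod_list (y # ys) = (x * y) * prod_list ys" by (simp add: mult.assoc)
  also have "\<dots> = y * (x * prod_list ys)" using Cons.prems by (simp add: mult.assoc)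
  also have "\<dots> = prod_list (y # ys) * x" using Cons by (simp add: mult.assoc)
  finally show ?case .
qed simp

lemma prod_list_inverse:
  fixes f g :: "'i \<Rightarrow> 'r::monoid_mult"
  assumes "\<forall>i\<in>set xs. f i * g i = 1 \<and> g i * f i = 1"
  shows "prod_list (map f xs) * prod_list (map g (rev xs)) = 1
       \<and> prod_list (map g (rev xs)) * prod_list (map f xs) = 1"
  using assms
proof (induction xs)
  case (Cons x xs)
  then have IH: "prod_list (map f xs) * prod_list (map g (rev xs)) = 1"
    "prod_list (map g (rev xs)) * prod_list (map f xs) = 1"
    and x: "f x * g x = 1" "g x * f x = 1" by auto
  have "prod_list (map f (x # xs)) * prod_list (map g (rev (x # xs)))
      = f x * (prod_list (map f xs) * prod_list (map g (rev xs))) * g x"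
    by (simp add: mult.assoc)
  moreover have "prod_list (map g (rev (x # xs))) * prod_list (map f (x # xs))
      = prod_list (map g (rev xs)) * (g x * f x) * prod_list (map f xs)"
    by (simp add: mult.assoc)
  ultimately show ?case using IH x by simp
qed simp

lemma zpow_commute:
  "y * t = t * y \<Longrightarrow> y * ti = ti * y \<Longrightarrow> y * zpow t ti a = zpow t ti a * y"
  unfolding zpow_def by (simp add: power_commuting_commutes)

context
  fixes t ti :: "'r::ring_1"
  assumes t_ti: "t * ti = 1" and ti_t: "ti * t = 1"
begin

lemma commute_inverse: "y * t = t * y \<Longrightarrow> y * ti = ti * y"
proof -
  assume "y * t = t * y"
  then have "ti * (y * t) * ti = ti * (t * y) * ti" by simp
  then show ?thesis using t_ti ti_t by (simp add: mult.assoc[symmetric]) (simp add: mult.assoc)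
qed

lemma zpow_add_one: "zpow t ti (a + 1) = t * zpow t ti a"
proof (cases "a \<ge> 0")
  case True
  then have "nat (a + 1) = Suc (nat a)" by simp
  then show ?thesis using True by (simp add: zpow_def)
next
  case False
  then have "nat (- a) = Suc (nat (- (a + 1)))" by simp
  then have "t * zpow t ti a = (t * ti) * ti ^ nat (- (a + 1))"
    using False by (simp add: zpow_def mult.assoc)
  then show ?thesis using False t_ti by (simp add: zpow_def)
qed

lemma zpow_diff_one: "zpow t ti (a - 1) = ti * zpow t ti a"
  using zpow_add_one[of "a - 1"] ti_t by (simp add: mult.assoc[symmetric])

lemma zpow_diff_one_right: "zpow t ti (a - 1) = zpow t ti a * ti"
  using zpow_diff_one zpow_commute[of ti t ti a] t_ti ti_t by simp

end

lemma zpow_one: "zpow t ti 1 = t"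
  by (simp add: zpow_def)

lemma zpow_zero: "zpow t ti 0 = 1"
  by (simp add: zpow_def)

section \<open>Linear combinations with central coefficients\<close>

locale central_coeff_map =
  fixes \<phi> :: "laurent \<Rightarrow> 'r::ring_1" and A :: "laurent set"
  assumes one_mem: "1 \<in> A"
    and add_mem: "a \<in> A \<Longrightarrow> b \<in> A \<Longrightarrow> a + b \<in> A"
    and mult_mem: "a \<in> A \<Longrightarrow> b \<in> A \<Longrightarrow> a * b \<in> A"
    and uminus_mem: "a \<in> A \<Longrightarrow> - a \<in> A"
    and phi_add: "a \<in> A \<Longrightarrow> b \<in> A \<Longrightarrow> \<phi> (a + b) = \<phi> a + \<phi> b"
    and phi_mult: "a \<in> A \<Longrightarrow> b \<in> A \<Longrightarrow> \<phi> (a * b) = \<phi> a * \<phi> b"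
    and phi_one: "\<phi> 1 = 1"
    and phi_central: "a \<in> A \<Longrightarrow> \<phi> a * x = x * \<phi> a"
begin

lemma zero_mem: "0 \<in> A"
  using add_mem[OF one_mem uminus_mem[OF one_mem]] by simp

lemma phi_zero: "\<phi> 0 = 0"
  using phi_add[OF zero_mem zero_mem] by simp

lemma phi_uminus: "a \<in> A \<Longrightarrow> \<phi> (- a) = - \<phi> a"
  using phi_add[OF _ uminus_mem, of a a] phi_zero by (simp add: eq_neg_iff_add_eq_0 add.commute)

lemma lin_span_induct [consumes 1, case_names zero step]:
  assumes "x \<in> lin_span \<phi> A B" and "P 0"
    and "\<And>c b x. c \<in> A \<Longrightarrow> b \<in> B \<Longrightarrow> P x \<Longrightarrow> P (\<phi> c * b + x)"
  shows "P x"
proof -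
  obtain k :: nat and c b where cb: "\<forall>i<k. c i \<in> A \<and> b i \<in> B"
    and x: "x = (\<Sum>i<k. \<phi> (c i) * b i)"
    using assms(1) unfolding lin_span_def by blast
  have "k' \<le> k \<Longrightarrow> P (\<Sum>i<k'. \<phi> (c i) * b i)" for k'
  proof (induction k')
    case (Suc k')
    then have "P (\<phi> (c k') * b k' + (\<Sum>i<k'. \<phi> (c i) * b i))"
      using cb assms(3) by simp
    then show ?case by (simp add: add.commute)
  qed (use assms(2) in simp)
  then show ?thesis using x by simp
qed

lemma lin_span_zero: "0 \<in> lin_span \<phi> A B"
  unfolding lin_span_def by (rule CollectI, rule exI[of _ 0]) simp

lemma lin_span_add_scaled:
  assumes "c \<in> A" "b \<in> B" "x \<in> lin_span \<phi> A B"
  shows "\<phi> c * b + x \<in> lin_span \<phi> A B"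
proof -
  obtain k :: nat and cs bs where k: "\<forall>i<k. cs i \<in> A \<and> bs i \<in> B"
    and x: "x = (\<Sum>i<k. \<phi> (cs i) * bs i)"
    using assms(3) unfolding lin_span_def by blast
  have "\<forall>i<Suc k. (cs(k := c)) i \<in> A \<and> (bs(k := b)) i \<in> B" using k assms by auto
  moreover have "\<phi> c * b + x = (\<Sum>i<Suc k. \<phi> ((cs(k := c)) i) * (bs(k := b)) i)"
    using x by (simp add: add.commute)
  ultimately show ?thesis unfolding lin_span_def by blast
qed

lemma lin_span_base: "b \<in> B \<Longrightarrow> b \<in> lin_span \<phi> A B"
  using lin_span_add_scaled[OF one_mem _ lin_span_zero, of b B] by (simp add: phi_one)

lemma lin_span_add:
  "x \<in> lin_span \<phi> A B \<Longrightarrow> y \<in> lin_span \<phi> A B \<Longrightarrow> x + y \<in> lin_span \<phi> A B"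
  by (induction x rule: lin_span_induct) (auto simp: add.assoc intro: lin_span_add_scaled)

lemma lin_span_scale: "x \<in> lin_span \<phi> A B \<Longrightarrow> d \<in> A \<Longrightarrow> \<phi> d * x \<in> lin_span \<phi> A B"
proof (induction x rule: lin_span_induct)
  case (step c b x)
  have "\<phi> d * (\<phi> c * b + x) = \<phi> (d * c) * b + \<phi> d * x"
    using step by (simp add: phi_mult distrib_left mult.assoc)
  then show ?case using step by (auto intro!: lin_span_add_scaled mult_mem)
qed (simp add: lin_span_zero)

lemma lin_span_uminus: "x \<in> lin_span \<phi> A B \<Longrightarrow> - x \<in> lin_span \<phi> A B"
  using lin_span_scale[OF _ uminus_mem[OF one_mem]] by (simp add: phi_uminus[OF one_mem] phi_one)

lemma lin_span_diff:
  "x \<in> lin_span \<phi> A B \<Longrightarrow> y \<in> lin_span \<phi> A B \<Longrightarrow> x - y \<in> lin_span \<phi> A B"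
  using lin_span_add[OF _ lin_span_uminus] by (metis diff_conv_add_uminus)

lemma lin_span_subset_trans:
  "x \<in> lin_span \<phi> A B \<Longrightarrow> B \<subseteq> lin_span \<phi> A B' \<Longrightarrow> x \<in> lin_span \<phi> A B'"
  by (induction x rule: lin_span_induct) (auto intro: lin_span_add lin_span_scale lin_span_zero)

lemma lin_span_mult_left:
  "x \<in> lin_span \<phi> A B \<Longrightarrow> (\<And>b. b \<in> B \<Longrightarrow> g * b \<in> lin_span \<phi> A B')
   \<Longrightarrow> g * x \<in> lin_span \<phi> A B'"
proof (induction x rule: lin_span_induct)
  case (step c b x)
  have "g * (\<phi> c * b + x) = \<phi> c * (g * b) + g * x"
    using step phi_central[of c g] by (simp add: distrib_left flip: mult.assoc)
  then show ?case using step by (auto intro!: lin_span_add lin_span_scale)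
qed (simp add: lin_span_zero)

lemma lin_span_mult_right:
  "x \<in> lin_span \<phi> A B \<Longrightarrow> (\<And>b. b \<in> B \<Longrightarrow> b * g \<in> lin_span \<phi> A B')
   \<Longrightarrow> x * g \<in> lin_span \<phi> A B'"
proof (induction x rule: lin_span_induct)
  case (step c b x)
  have "(\<phi> c * b + x) * g = \<phi> c * (b * g) + x * g"
    by (simp add: distrib_right mult.assoc)
  then show ?case using step by (auto intro!: lin_span_add lin_span_scale)
qed (simp add: lin_span_zero)

lemma alg_gen_subset_lin_span:
  assumes one: "1 \<in> lin_span \<phi> A B"
    and closed: "\<And>g x. g \<in> G \<Longrightarrow> x \<in> lin_span \<phi> A B \<Longrightarrow> g * x \<in> lin_span \<phi> A B"
  shows "alg_gen \<phi> A G \<subseteq> lin_span \<phi> A B"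
proof
  fix y assume "y \<in> alg_gen \<phi> A G"
  then have "\<forall>x\<in>lin_span \<phi> A B. y * x \<in> lin_span \<phi> A B"
  proof (induction y rule: alg_gen.induct)
    case (add x y) then show ?case by (simp add: distrib_right lin_span_add)
  next
    case (mult x y) then show ?case by (simp add: mult.assoc)
  qed (auto intro: lin_span_scale closed)
  then show "y \<in> lin_span \<phi> A B" using one by force
qed

definition pow_span :: "'r \<Rightarrow> nat \<Rightarrow> 'r set" where
  "pow_span x k = lin_span \<phi> A {x ^ j | j. j < k}"

lemma pow_span_base: "j < k \<Longrightarrow> x ^ j \<in> pow_span x k"
  unfolding pow_span_def by (rule lin_span_base) blast

lemma pow_span_mono: "y \<in> pow_span x k \<Longrightarrow> k \<le> k' \<Longrightarrow> y \<in> pow_span x k'"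
  using pow_span_base unfolding pow_span_def by (erule_tac lin_span_subset_trans) auto

lemma pow_span_mult: "y \<in> pow_span x k \<Longrightarrow> x * y \<in> pow_span x (Suc k)"
  using pow_span_base unfolding pow_span_def
  by (erule_tac lin_span_mult_left) (auto simp flip: power_Suc)

lemma pow_span_mult_closed:
  assumes "x ^ k \<in> pow_span x k" and "y \<in> pow_span x k"
  shows "x * y \<in> pow_span x k"
  using assms(2) unfolding pow_span_def
proof (rule lin_span_mult_left)
  fix b assume "b \<in> {x ^ j |j. j < k}"
  then obtain j where j: "b = x ^ j" "j < k" by blast
  show "x * b \<in> lin_span \<phi> A {x ^ j |j. j < k}"
  proof (cases "Suc j < k")
    case True then show ?thesis using j pow_span_base[of "Suc j" k x] by (simp add: pow_span_def)
  next
    case False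
    then have "k = Suc j" using j by simp
    then have "x * b = x ^ k" using j by simp
    then show ?thesis using assms(1) by (simp add: pow_span_def)
  qed
qed

lemma pow_span_inverse_closed:
  assumes xi_x: "xi * x = 1" and xi: "xi \<in> pow_span x k" and y: "y \<in> pow_span x k"
  shows "xi * y \<in> pow_span x k"
  using y unfolding pow_span_def
proof (rule lin_span_mult_left)
  fix b assume "b \<in> {x ^ j |j. j < k}"
  then obtain j where j: "b = x ^ j" "j < k" by blast
  show "xi * b \<in> lin_span \<phi> A {x ^ j |j. j < k}"
  proof (cases j)
    case 0 then show ?thesis using j xi by (simp add: pow_span_def)
  next
    case (Suc j')
    then have "xi * b = x ^ j'" using j xi_x by (simp flip: mult.assoc)
    then show ?thesis using j Suc by (intro lin_span_base) auto
  qed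
qed

lemma prod_uminus_mem: "\<forall>a\<in>set l. a \<in> A \<Longrightarrow> prod_list (map uminus l) \<in> A"
  by (induction l) (auto intro: mult_mem uminus_mem one_mem)

lemma linear_factors_leading:
  "\<forall>a\<in>set l. a \<in> A \<Longrightarrow>
   \<exists>y\<in>pow_span x (length l). prod_list (map (\<lambda>a. x - \<phi> a) l) = x ^ length l + y"
proof (induction l)
  case Nil then show ?case using lin_span_zero by (auto simp: pow_span_def)
next
  case (Cons a l)
  then obtain y where y: "y \<in> pow_span x (length l)"
    "prod_list (map (\<lambda>a. x - \<phi> a) l) = x ^ length l + y" and a: "a \<in> A" by auto
  let ?k = "length l"
  have "prod_list (map (\<lambda>a. x - \<phi> a) (a # l)) = x ^ Suc ?k + (x * y - \<phi> a * x ^ ?k - \<phi> a * y)"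
    using y(2) phi_central[OF a, of x] by (simp add: algebra_simps)
  moreover have "x * y - \<phi> a * x ^ ?k - \<phi> a * y \<in> pow_span x (Suc ?k)"
    using pow_span_mult[OF y(1)] pow_span_base[of ?k "Suc ?k"] pow_span_mono[OF y(1), of "Suc ?k"] a
    unfolding pow_span_def by (auto intro!: lin_span_diff lin_span_scale)
  ultimately show ?case by auto
qed

lemma linear_factors_constant:
  "\<forall>a\<in>set l. a \<in> A \<Longrightarrow>
   \<exists>z\<in>pow_span x (length l).
     prod_list (map (\<lambda>a. x - \<phi> a) l) = \<phi> (prod_list (map uminus l)) + x * z"
proof (induction l)
  case Nil show ?case by (rule bexI[of _ 0]) (auto simp: pow_span_def phi_one lin_span_zero)
next
  case (Cons a l)
  then obtain z where z: "z \<in> pow_span x (length l)"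
      "prod_list (map (\<lambda>a. x - \<phi> a) l) = \<phi> (prod_list (map uminus l)) + x * z"
    and a: "a \<in> A" and l: "\<forall>a\<in>set l. a \<in> A" by auto
  let ?k = "length l" and ?c = "prod_list (map uminus l)"
  have c: "?c \<in> A" using prod_uminus_mem[OF l] .
  have "\<phi> (prod_list (map uminus (a # l))) = - (\<phi> a * \<phi> ?c)"
    using phi_mult[OF uminus_mem[OF a] c] phi_uminus[OF a] by simp
  moreover have "x * (\<phi> a * z) = \<phi> a * (x * z)"
    by (simp add: phi_central[OF a, of x] flip: mult.assoc)
  ultimately have "prod_list (map (\<lambda>a. x - \<phi> a) (a # l))
      = \<phi> (prod_list (map uminus (a # l))) + x * (\<phi> ?c + x * z - \<phi> a * z)"
    using z(2) phi_central[OF a, of x] phi_central[OF c, of x] by (simp add: algebra_simps)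
  moreover have "\<phi> ?c + x * z - \<phi> a * z \<in> pow_span x (Suc ?k)"
    using lin_span_scale[OF pow_span_base[of 0 "Suc ?k" x, unfolded pow_span_def] c]
      pow_span_mult[OF z(1)]
      lin_span_scale[OF pow_span_mono[OF z(1), of "Suc ?k", unfolded pow_span_def] a]
    unfolding pow_span_def by (auto intro!: lin_span_diff lin_span_add)
  ultimately show ?case by auto
qed

lemma zpow_in_pow_span:
  assumes t_ti: "t * ti = 1" and ti_t: "ti * t = 1"
    and l: "l \<noteq> []" "\<forall>a\<in>set l. a \<in> A" and root: "prod_list (map (\<lambda>a. t - \<phi> a) l) = 0"
    and c: "c \<in> A" "\<phi> (prod_list (map uminus l)) * \<phi> c = 1"
  shows "zpow t ti a \<in> pow_span t (length l)"
proof -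
  let ?k = "length l"
  obtain y where y: "y \<in> pow_span t ?k" "0 = t ^ ?k + y"
    using linear_factors_leading[OF l(2), of t] root by auto
  then have "t ^ ?k = - y" by (simp add: eq_neg_iff_add_eq_0)
  then have top: "t ^ ?k \<in> pow_span t ?k"
    using lin_span_uminus y(1) unfolding pow_span_def by simp
  obtain z where z: "z \<in> pow_span t ?k" "0 = \<phi> (prod_list (map uminus l)) + t * z"
    using linear_factors_constant[OF l(2), of t] root by auto
  have "t * \<phi> c = \<phi> c * t" using phi_central[OF c(1)] by simp
  then have "t * (- \<phi> c * z) = - \<phi> c * (t * z)"
    by (simp flip: mult.assoc)
  also have "\<dots> = \<phi> c * \<phi> (prod_list (map uminus l))"
  proof -
    have "t * z = - \<phi> (prod_list (map uminus l))"
      using z(2) by (simp add: eq_neg_iff_add_eq_0 add.commute)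
    then show ?thesis by simp
  qed
  also have "\<dots> = 1"
    using c(2) phi_central[OF c(1)] by simp
  finally have "ti = - \<phi> c * z"
    using ti_t by (metis mult.assoc mult_1_left mult_1_right)
  then have ti: "ti \<in> pow_span t ?k"
    using lin_span_scale[OF z(1)[unfolded pow_span_def] uminus_mem[OF c(1)]] phi_uminus[OF c(1)]
    unfolding pow_span_def by simp
  show ?thesis
  proof (induction a rule: int_induct[where k=0])
    case base then show ?case using pow_span_base[of 0 ?k t] l(1) by (simp add: zpow_zero)
  next
    case (step1 i) then show ?case
      using pow_span_mult_closed[OF top] zpow_add_one[OF t_ti ti_t] by simp
  next
    case (step2 i) then show ?case
      using pow_span_inverse_closed[OF ti_t ti] zpow_diff_one[OF t_ti ti_t] by simp
  qed
qed

end

section \<open>The defining relations of H(m,1,n)\<close>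

locale hecke =
  fixes m :: enat and n :: nat and \<phi> :: "laurent \<Rightarrow> 'r::ring_1"
    and t ti :: 'r and s :: "nat \<Rightarrow> 'r"
  assumes is_H: "is_H m n \<phi> t ti s"
begin

sublocale central_coeff_map \<phi> "coeffA m"
  using is_H unfolding is_H_def
  by unfold_locales (blast intro: coeffA_add coeffA_mult coeffA_uminus coeffA_one)+

lemma t_ti: "t * ti = 1" and ti_t: "ti * t = 1"
  using is_H unfolding is_H_def by blast+

lemma s_braid: "1 \<le> i \<Longrightarrow> i \<le> n - 2 \<Longrightarrow> s i * s (i+1) * s i = s (i+1) * s i * s (i+1)"
  using is_H unfolding is_H_def by blast

lemma s_far_commute:
  "1 \<le> i \<Longrightarrow> i \<le> n - 1 \<Longrightarrow> 1 \<le> j \<Longrightarrow> j \<le> n - 1 \<Longrightarrow> i + 1 < j \<or> j + 1 < i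
   \<Longrightarrow> s i * s j = s j * s i"
  using is_H unfolding is_H_def by blast

lemma t_s1_braid: "2 \<le> n \<Longrightarrow> t * s 1 * t * s 1 = s 1 * t * s 1 * t"
  using is_H unfolding is_H_def by blast

lemma t_s_commute: "2 \<le> i \<Longrightarrow> i \<le> n - 1 \<Longrightarrow> t * s i = s i * t"
  using is_H unfolding is_H_def by blast

lemma t_root:
  "m \<noteq> \<infinity> \<Longrightarrow> prod_list (map (\<lambda>i. t - \<phi> (lvar i)) [1..<the_enat m + 1]) = 0"
  using is_H unfolding is_H_def by blast

lemma generated: "alg_gen \<phi> (coeffA m) ({t, ti} \<union> s ` {1..<n}) = UNIV"
  using is_H unfolding is_H_def by blast

definition qdiff :: 'r where "qdiff = \<phi> (qq - qq_inv)"

lemma qdiff_coeff: "qq - qq_inv \<in> coeffA m"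
  unfolding diff_conv_add_uminus
  by (intro coeffA_add coeffA_uminus coeffA_lvar coeffA_lvar_inv) simp_all

lemma qdiff_central: "qdiff * x = x * qdiff"
  unfolding qdiff_def by (rule phi_central[OF qdiff_coeff])

lemma s_quadratic: "1 \<le> i \<Longrightarrow> i \<le> n - 1 \<Longrightarrow> s i * s i = qdiff * s i + 1"
  using is_H unfolding is_H_def qdiff_def by blast

definition s_inv :: "nat \<Rightarrow> 'r" where "s_inv i = s i - qdiff"

lemma s_s_inv: "1 \<le> i \<Longrightarrow> i \<le> n - 1 \<Longrightarrow> s i * s_inv i = 1"
  and s_inv_s: "1 \<le> i \<Longrightarrow> i \<le> n - 1 \<Longrightarrow> s_inv i * s i = 1"
  using inverse_of_quadratic[OF s_quadratic qdiff_central] unfolding s_inv_def by blast+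

lemma ring_inv_s: "1 \<le> i \<Longrightarrow> i \<le> n - 1 \<Longrightarrow> ring_inv (s i) = s_inv i"
  by (rule ring_inv_eqI[OF s_s_inv s_inv_s])

lemma s_inv_commute: "y * s i = s i * y \<Longrightarrow> y * s_inv i = s_inv i * y"
  unfolding s_inv_def by (simp add: right_diff_distrib left_diff_distrib qdiff_central)

abbreviation sprod :: "nat list \<Rightarrow> 'r" where "sprod xs \<equiv> prod_list (map s xs)"
abbreviation sprod_inv :: "nat list \<Rightarrow> 'r" where "sprod_inv xs \<equiv> prod_list (map s_inv (rev xs))"

lemma sprod_upt_inverse:
  assumes "1 \<le> a" and "b \<le> n"
  shows "sprod [a..<b] * sprod_inv [a..<b] = 1" and "sprod_inv [a..<b] * sprod [a..<b] = 1"
proof -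
  have "\<forall>i\<in>set [a..<b]. s i * s_inv i = 1 \<and> s_inv i * s i = 1"
    using assms by (auto intro!: s_s_inv s_inv_s)
  from prod_list_inverse[OF this] show "sprod [a..<b] * sprod_inv [a..<b] = 1"
    and "sprod_inv [a..<b] * sprod [a..<b] = 1" by blast+
qed

abbreviation tail :: "nat \<Rightarrow> 'r" where "tail k \<equiv> sprod [k..<n]"
abbreviation tail_inv :: "nat \<Rightarrow> 'r" where "tail_inv k \<equiv> sprod_inv [k..<n]"
abbreviation cox :: 'r where "cox \<equiv> tail 1"
abbreviation cox_inv :: 'r where "cox_inv \<equiv> tail_inv 1"
abbreviation tpow :: "int \<Rightarrow> 'r" where "tpow a \<equiv> zpow t ti a"

lemma cox_cox_inv: "cox * cox_inv = 1" and cox_inv_cox: "cox_inv * cox = 1"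
  using sprod_upt_inverse[of 1 n] by auto

lemma cox_split: "2 \<le> n \<Longrightarrow> cox = s 1 * tail 2 \<and> cox_inv = tail_inv 2 * s_inv 1"
  by (simp add: upt_conv_Cons numeral_2_eq_2)

lemma s_tail_shift:
  assumes "1 \<le> k" "k < i" "i \<le> n - 1"
  shows "s i * tail k = tail k * s (i - 1)"
proof -
  let ?L1 = "[k..<i-1]" and ?L3 = "[i+1..<n]"
  have "[k..<n] = ?L1 @ [i-1..<n]" using upt_add_eq_append[of k "i-1" "n-(i-1)"] assms by simp
  also have "[i-1..<n] = (i-1) # i # ?L3" using assms
    by (subst upt_conv_Cons, simp, subst upt_conv_Cons, auto)
  finally have L: "[k..<n] = ?L1 @ (i-1) # i # ?L3" .
  have c1: "s i * sprod ?L1 = sprod ?L1 * s i"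
    by (rule prod_list_commute) (use assms in \<open>auto intro!: s_far_commute\<close>)
  have c3: "s (i-1) * sprod ?L3 = sprod ?L3 * s (i-1)"
    by (rule prod_list_commute) (use assms in \<open>auto intro!: s_far_commute\<close>)
  have br: "s (i-1) * s i * s (i-1) = s i * s (i-1) * s i"
    using s_braid[of "i-1"] assms by simp
  have "s i * tail k = (s i * sprod ?L1) * s (i-1) * s i * sprod ?L3"
    unfolding L by (simp add: mult.assoc)
  also have "\<dots> = sprod ?L1 * (s i * s (i-1) * s i) * sprod ?L3"
    unfolding c1 by (simp add: mult.assoc)
  also have "\<dots> = sprod ?L1 * s (i-1) * s i * (s (i-1) * sprod ?L3)"
    unfolding br[symmetric] by (simp add: mult.assoc)
  also have "\<dots> = tail k * s (i - 1)"
    unfolding c3 L by (simp add: mult.assoc)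
  finally show ?thesis .
qed

lemma sprod_Suc_cox:
  "\<forall>x\<in>set xs. 1 \<le> x \<and> x \<le> n - 2 \<Longrightarrow> sprod (map Suc xs) * cox = cox * sprod xs"
proof (induction xs)
  case (Cons x xs)
  then have IH: "sprod (map Suc xs) * cox = cox * sprod xs" and x: "1 \<le> x" "x \<le> n - 2" by auto
  have "sprod (map Suc (x # xs)) * cox = s (Suc x) * (sprod (map Suc xs) * cox)"
    by (simp add: mult.assoc)
  also have "\<dots> = (s (Suc x) * cox) * sprod xs" using IH by (simp add: mult.assoc)
  also have "\<dots> = cox * sprod (x # xs)" using s_tail_shift[of 1 "Suc x"] x by (simp add: mult.assoc)
  finally show ?case .
qed simp

lemma tail_cox: "2 \<le> k \<Longrightarrow> k \<le> n \<Longrightarrow> tail k * cox = cox * sprod [k-1..<n-1]"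
proof -
  assume k: "2 \<le> k" "k \<le> n"
  then have "[k..<n] = map Suc [k-1..<n-1]" by (simp add: map_Suc_upt)
  moreover have "\<forall>x\<in>set [k-1..<n-1]. 1 \<le> x \<and> x \<le> n - 2" using k by auto
  ultimately show ?thesis using sprod_Suc_cox by metis
qed

lemma tail_inv_cox: "2 \<le> n \<Longrightarrow> tail_inv 2 * cox = cox * sprod_inv [1..<n-1]"
proof -
  assume n: "2 \<le> n"
  have "tail_inv 2 * cox = tail_inv 2 * (tail 2 * cox) * sprod_inv [1..<n-1]"
    using tail_cox[of 2] n sprod_upt_inverse(1)[of 1 "n-1"] by (simp add: mult.assoc)
  also have "\<dots> = cox * sprod_inv [1..<n-1]"
    using sprod_upt_inverse(2)[of 2 n] by (simp flip: mult.assoc)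
  finally show ?thesis .
qed

definition tconj :: "int \<Rightarrow> 'r" where "tconj a = cox_inv * tpow a * cox"

lemma tconj_zero: "tconj 0 = 1"
  unfolding tconj_def using cox_inv_cox by (simp add: zpow_zero)

lemma tpow_cox: "tpow b * cox = cox * tconj b"
proof -
  have "cox * tconj b = (cox * cox_inv) * tpow b * cox" by (simp add: tconj_def mult.assoc)
  then show ?thesis using cox_cox_inv by simp
qed

lemma tpow_commute: "y * t = t * y \<Longrightarrow> y * tpow a = tpow a * y"
  using zpow_commute commute_inverse[OF t_ti ti_t] by blast

lemma s_tconj_commute:
  assumes "1 \<le> i" "i \<le> n - 2"
  shows "s i * tconj a = tconj a * s i"
proof -
  have sh: "s (Suc i) * cox = cox * s i" using s_tail_shift[of 1 "Suc i"] assms by simp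
  have "cox_inv * s (Suc i) = cox_inv * s (Suc i) * (cox * cox_inv)"
    using cox_cox_inv by simp
  also have "\<dots> = cox_inv * (s (Suc i) * cox) * cox_inv" by (simp add: mult.assoc)
  also have "\<dots> = (cox_inv * cox) * s i * cox_inv" unfolding sh by (simp add: mult.assoc)
  finally have sh_inv: "cox_inv * s (Suc i) = s i * cox_inv" using cox_inv_cox by simp
  have comm: "s (Suc i) * tpow a = tpow a * s (Suc i)"
    using t_s_commute[of "Suc i"] assms by (intro tpow_commute) simp
  have "s i * tconj a = (s i * cox_inv) * tpow a * cox" by (simp add: tconj_def mult.assoc)
  also have "\<dots> = cox_inv * (s (Suc i) * tpow a) * cox"
    unfolding sh_inv[symmetric] by (simp add: mult.assoc)
  also have "\<dots> = cox_inv * tpow a * (s (Suc i) * cox)" unfolding comm by (simp add: mult.assoc)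
  also have "\<dots> = tconj a * s i" unfolding sh tconj_def by (simp add: mult.assoc)
  finally show ?thesis .
qed

lemma tail2_commute:
  shows tail2_t: "t * tail 2 = tail 2 * t" and tail2_ti: "ti * tail 2 = tail 2 * ti"
    and tail2_tpow: "tail 2 * tpow a = tpow a * tail 2"
    and tail_inv2_t: "t * tail_inv 2 = tail_inv 2 * t"
    and tail_inv2_ti: "ti * tail_inv 2 = tail_inv 2 * ti"
    and tail_inv2_tpow: "tail_inv 2 * tpow a = tpow a * tail_inv 2"
proof -
  show t1: "t * tail 2 = tail 2 * t"
    by (rule prod_list_commute) (auto intro!: t_s_commute)
  show t2: "t * tail_inv 2 = tail_inv 2 * t"
    by (rule prod_list_commute) (auto intro!: s_inv_commute t_s_commute)
  show "ti * tail 2 = tail 2 * ti" "ti * tail_inv 2 = tail_inv 2 * ti"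
    using commute_inverse[OF t_ti ti_t] t1 t2 by metis+
  show "tail 2 * tpow a = tpow a * tail 2" "tail_inv 2 * tpow a = tpow a * tail_inv 2"
    using tpow_commute t1 t2 by metis+
qed

text \<open>The relation t s_1 t s_1 = s_1 t s_1 t says that s_1 t s_1 commutes with t, hence with
  every power of t; conjugating by s_1 gives the following.\<close>

lemma s1_twist_t:
  assumes "2 \<le> n"
  shows "s_inv 1 * tpow a * s 1 * t = t * s 1 * tpow a * s_inv 1"
proof -
  let ?Y = "s 1 * t * s 1"
  have "?Y * t = t * ?Y" using t_s1_braid[OF assms] by (simp add: mult.assoc)
  then have Y: "?Y * tpow a = tpow a * ?Y" by (rule tpow_commute)
  have inv: "s 1 * s_inv 1 = 1" "s_inv 1 * s 1 = 1" using s_s_inv[of 1] s_inv_s[of 1] assms by auto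
  have "s_inv 1 * tpow a * s 1 * t = s_inv 1 * (tpow a * ?Y) * s_inv 1"
    using inv by (simp add: mult.assoc)
  also have "\<dots> = s_inv 1 * (?Y * tpow a) * s_inv 1" by (simp only: Y)
  also have "\<dots> = (s_inv 1 * s 1) * t * s 1 * tpow a * s_inv 1" by (simp add: mult.assoc)
  also have "\<dots> = t * s 1 * tpow a * s_inv 1" using inv by simp
  finally show ?thesis .
qed

lemma t_mult_s1_twist:
  assumes "2 \<le> n"
  shows "t * (s_inv 1 * tpow a * s 1)
       = qdiff * (t * s 1 * tpow a) + s_inv 1 * tpow a * s 1 * t - qdiff * (tpow (a + 1) * s 1)"
proof -
  have "t * (s_inv 1 * tpow a * s 1) = t * s 1 * tpow a * s 1 - qdiff * (tpow (a + 1) * s 1)"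
    unfolding s_inv_def zpow_add_one[OF t_ti ti_t] by (simp add: algebra_simps qdiff_central)
  also have "t * s 1 * tpow a * s 1 = t * s 1 * tpow a * s_inv 1 + qdiff * (t * s 1 * tpow a)"
    unfolding s_inv_def by (simp add: algebra_simps qdiff_central)
  finally show ?thesis unfolding s1_twist_t[OF assms, symmetric] by (simp add: algebra_simps)
qed

lemma ti_mult_s1_twist:
  assumes "2 \<le> n"
  shows "ti * (s_inv 1 * tpow a * s 1)
       = s_inv 1 * tpow a * s 1 * ti + qdiff * (tpow a * s 1 * ti) - qdiff * (s 1 * tpow (a - 1))"
proof -
  have "ti * (s_inv 1 * tpow a * s 1 * t) * ti = ti * (t * s 1 * tpow a * s_inv 1) * ti"
    using s1_twist_t[OF assms] by simp
  then have twist: "ti * (s_inv 1 * tpow a * s 1) = s 1 * tpow a * s_inv 1 * ti"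
    using t_ti ti_t by (simp add: mult.assoc) (simp flip: mult.assoc)
  have "s 1 * tpow a * s_inv 1 * ti = s 1 * tpow a * s 1 * ti - qdiff * (s 1 * tpow (a - 1))"
    unfolding s_inv_def zpow_diff_one_right[OF t_ti ti_t] by (simp add: algebra_simps qdiff_central)
  also have "s 1 * tpow a * s 1 * ti = s_inv 1 * tpow a * s 1 * ti + qdiff * (tpow a * s 1 * ti)"
    unfolding s_inv_def by (simp add: algebra_simps qdiff_central)
  finally show ?thesis unfolding twist by (simp add: algebra_simps)
qed

lemma tconj_eq_twist: "2 \<le> n \<Longrightarrow> tconj a = tail_inv 2 * (s_inv 1 * tpow a * s 1) * tail 2"
  using cox_split tail2_tpow by (simp add: tconj_def mult.assoc)

lemma tail2_conj_s1: "2 \<le> n \<Longrightarrow> tail_inv 2 * s 1 * tail 2 = cox * sprod_inv [1..<n-1]"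
  using cox_split tail_inv_cox by (simp add: mult.assoc)

lemma tpow_cox_mult: "tpow b * (cox * x) = cox * (tconj b * x)"
  using tpow_cox[of b] by (metis mult.assoc)

lemma t_mult_tconj:
  assumes n: "2 \<le> n"
  shows "t * tconj a = qdiff * (cox * tconj 1 * (sprod_inv [1..<n-1] * tpow a)) + tconj a * t
                     - qdiff * (cox * tconj (a + 1) * sprod_inv [1..<n-1])"
proof -
  have "t * tconj a = tail_inv 2 * (t * (s_inv 1 * tpow a * s 1)) * tail 2"
    unfolding tconj_eq_twist[OF n] by (simp add: tail_inv2_t flip: mult.assoc)
  also have "\<dots> = qdiff * (tail_inv 2 * t * s 1 * tpow a * tail 2)
                  + tail_inv 2 * (s_inv 1 * tpow a * s 1) * t * tail 2
                  - qdiff * (tail_inv 2 * tpow (a + 1) * s 1 * tail 2)"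
    unfolding t_mult_s1_twist[OF n] by (simp add: algebra_simps qdiff_central)
  also have "tail_inv 2 * t * s 1 * tpow a * tail 2 = t * (tail_inv 2 * s 1 * tail 2) * tpow a"
  proof -
    have "tail_inv 2 * t * s 1 * tpow a * tail 2 = (tail_inv 2 * t) * s 1 * (tpow a * tail 2)"
      by (simp add: mult.assoc)
    also have "\<dots> = (t * tail_inv 2) * s 1 * (tail 2 * tpow a)"
      by (simp only: tail_inv2_t tail2_tpow)
    finally show ?thesis by (simp add: mult.assoc)
  qed
  also have "tail_inv 2 * (s_inv 1 * tpow a * s 1) * t * tail 2 = tconj a * t"
    unfolding tconj_eq_twist[OF n] by (simp add: mult.assoc tail2_t)
  also have "tail_inv 2 * tpow (a + 1) * s 1 * tail 2 = tpow (a + 1) * (tail_inv 2 * s 1 * tail 2)"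
    by (simp add: mult.assoc tail_inv2_tpow)
  finally show ?thesis
    unfolding tail2_conj_s1[OF n]
    by (simp only: mult.assoc tpow_cox_mult tpow_cox_mult[of 1, unfolded zpow_one])
qed

lemma ti_mult_tconj:
  assumes n: "2 \<le> n"
  shows "ti * tconj a = tconj a * ti + qdiff * (cox * tconj a * (sprod_inv [1..<n-1] * ti))
                      - qdiff * (cox * tconj 0 * (sprod_inv [1..<n-1] * tpow (a - 1)))"
proof -
  have "ti * tconj a = tail_inv 2 * (ti * (s_inv 1 * tpow a * s 1)) * tail 2"
    unfolding tconj_eq_twist[OF n] by (simp add: tail_inv2_ti flip: mult.assoc)
  also have "\<dots> = tail_inv 2 * (s_inv 1 * tpow a * s 1) * ti * tail 2
                  + qdiff * (tail_inv 2 * tpow a * s 1 * ti * tail 2)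
                  - qdiff * (tail_inv 2 * s 1 * tpow (a - 1) * tail 2)"
    unfolding ti_mult_s1_twist[OF n] by (simp add: algebra_simps qdiff_central)
  also have "tail_inv 2 * (s_inv 1 * tpow a * s 1) * ti * tail 2 = tconj a * ti"
    unfolding tconj_eq_twist[OF n] by (simp add: mult.assoc tail2_ti)
  also have "tail_inv 2 * tpow a * s 1 * ti * tail 2 = tpow a * (tail_inv 2 * s 1 * tail 2) * ti"
    by (simp add: mult.assoc tail2_ti) (simp add: tail_inv2_tpow flip: mult.assoc)
  also have "tail_inv 2 * s 1 * tpow (a - 1) * tail 2 = (tail_inv 2 * s 1 * tail 2) * tpow (a - 1)"
    by (simp add: mult.assoc tail2_tpow)
  finally show ?thesis
    unfolding tail2_conj_s1[OF n]
    by (simp only: mult.assoc tpow_cox_mult tconj_zero mult_1_left)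
qed

section \<open>A spanning set\<close>

definition Wtilde :: "'r set" where "Wtilde = alg_gen \<phi> (coeffA m) ({t, ti} \<union> s ` {1..<n-1})"

lemma Wtilde_t: "t \<in> Wtilde" and Wtilde_ti: "ti \<in> Wtilde"
  unfolding Wtilde_def by (auto intro: alg_gen.gen)

lemma Wtilde_s: "1 \<le> i \<Longrightarrow> i \<le> n - 2 \<Longrightarrow> s i \<in> Wtilde"
  unfolding Wtilde_def by (auto intro: alg_gen.gen)

lemma Wtilde_one: "1 \<in> Wtilde"
  unfolding Wtilde_def using alg_gen.scal[OF coeffA_one] phi_one by metis

lemma Wtilde_mult: "x \<in> Wtilde \<Longrightarrow> y \<in> Wtilde \<Longrightarrow> x * y \<in> Wtilde"
  unfolding Wtilde_def by (rule alg_gen.mult)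

lemma Wtilde_s_inv: "1 \<le> i \<Longrightarrow> i \<le> n - 2 \<Longrightarrow> s_inv i \<in> Wtilde"
proof -
  assume i: "1 \<le> i" "i \<le> n - 2"
  have "s_inv i = s i + \<phi> (- (qq - qq_inv))"
    unfolding s_inv_def qdiff_def using phi_uminus[OF qdiff_coeff] by simp
  then show ?thesis using Wtilde_s[OF i] alg_gen.scal[OF uminus_mem[OF qdiff_coeff]] alg_gen.add
    unfolding Wtilde_def by metis
qed

lemma Wtilde_sprod: "\<forall>i\<in>set xs. 1 \<le> i \<and> i \<le> n - 2 \<Longrightarrow> sprod xs \<in> Wtilde"
  by (induction xs) (simp_all add: Wtilde_mult Wtilde_s Wtilde_one)

lemma Wtilde_sprod_inv: "\<forall>i\<in>set xs. 1 \<le> i \<and> i \<le> n - 2 \<Longrightarrow> sprod_inv xs \<in> Wtilde"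
  by (induction xs) (simp_all add: Wtilde_mult Wtilde_s_inv Wtilde_one)

lemma Wtilde_tpow: "tpow a \<in> Wtilde"
proof -
  have "t ^ k \<in> Wtilde" "ti ^ k \<in> Wtilde" for k
    by (induction k) (auto intro: Wtilde_mult Wtilde_one Wtilde_t Wtilde_ti)
  then show ?thesis unfolding zpow_def by simp
qed

lemma Wtilde_sprod_inv_cox: "sprod_inv [1..<n-1] \<in> Wtilde"
  by (rule Wtilde_sprod_inv) auto

definition gens :: "'r set" where
  "gens = {tail k * tconj a * w | k a w. 1 \<le> k \<and> k \<le> n \<and> w \<in> Wtilde}"

abbreviation gen_span :: "'r set" where "gen_span \<equiv> lin_span \<phi> (coeffA m) gens"

lemma gens_in_span: "1 \<le> k \<Longrightarrow> k \<le> n \<Longrightarrow> w \<in> Wtilde \<Longrightarrow> tail k * tconj a * w \<in> gen_span"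
  by (rule lin_span_base) (auto simp: gens_def)

lemma tail_tconj_in_span: "1 \<le> k \<Longrightarrow> k \<le> n \<Longrightarrow> tail k * tconj a \<in> gen_span"
  using gens_in_span[OF _ _ Wtilde_one] by simp

lemma gen_span_mult_Wsub:
  assumes "x \<in> gen_span" and w: "w \<in> Wtilde"
  shows "x * w \<in> gen_span"
  using assms(1)
proof (rule lin_span_mult_right)
  fix b assume "b \<in> gens"
  then obtain k a w' where "b = tail k * tconj a * w'" "1 \<le> k" "k \<le> n" "w' \<in> Wtilde"
    unfolding gens_def by blast
  then show "b * w \<in> gen_span"
    using gens_in_span[OF _ _ Wtilde_mult[OF _ w], of k w' a] by (simp add: mult.assoc)
qed

lemma gen_span_mult_left:
  assumes "\<And>k a. 1 \<le> k \<Longrightarrow> k \<le> n \<Longrightarrow> g * (tail k * tconj a) \<in> gen_span"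
    and "x \<in> gen_span"
  shows "g * x \<in> gen_span"
  using assms(2)
proof (rule lin_span_mult_left)
  fix b assume "b \<in> gens"
  then obtain k a w where "b = tail k * tconj a * w" "1 \<le> k" "k \<le> n" "w \<in> Wtilde"
    unfolding gens_def by blast
  then show "g * b \<in> gen_span" using gen_span_mult_Wsub[OF assms(1)] by (simp add: mult.assoc)
qed

lemma tail_cox_tconj_in_span:
  assumes k: "2 \<le> k" "k \<le> n" and w: "w \<in> Wtilde"
  shows "tail k * (cox * tconj b * w) \<in> gen_span"
proof -
  have comm: "tconj b * sprod [k-1..<n-1] = sprod [k-1..<n-1] * tconj b"
    by (rule prod_list_commute) (use k s_tconj_commute in auto)
  have "tail k * (cox * tconj b * w) = cox * tconj b * (sprod [k-1..<n-1] * w)"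
    using tail_cox[OF k] comm by (simp flip: mult.assoc) (simp add: mult.assoc)
  moreover have "sprod [k-1..<n-1] * w \<in> Wtilde"
    using k by (intro Wtilde_mult[OF Wtilde_sprod w]) auto
  ultimately show ?thesis using gens_in_span[of 1] k by simp
qed

lemma s_mult_gen_in_span:
  assumes i: "1 \<le> i" "i \<le> n - 1" and k: "1 \<le> k" "k \<le> n"
  shows "s i * (tail k * tconj a) \<in> gen_span"
proof -
  consider (apart) "i + 1 < k \<or> k < i" | (prev) "i + 1 = k" | (same) "i = k" by linarith
  then show ?thesis
  proof cases
    case apart
    obtain j where j: "s i * tail k = tail k * s j" "1 \<le> j" "j \<le> n - 2"
    proof (cases "k < i")
      case True then show ?thesis using that[of "i - 1"] s_tail_shift[of k i] i k by simp
    next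
      case False
      have "s i * tail k = tail k * s i"
        by (rule prod_list_commute) (use i k apart False in \<open>auto intro!: s_far_commute\<close>)
      then show ?thesis using that[of i] i k apart False by simp
    qed
    have "s i * (tail k * tconj a) = tail k * (s j * tconj a)" using j(1) by (simp flip: mult.assoc)
    also have "\<dots> = tail k * tconj a * s j"
      using s_tconj_commute[OF j(2,3)] by (simp add: mult.assoc)
    finally show ?thesis using gens_in_span[OF k Wtilde_s[OF j(2,3)]] by simp
  next
    case prev
    then have "s i * tail k = tail i" using k by (simp add: upt_conv_Cons)
    then show ?thesis using tail_tconj_in_span[of i a] i k by (simp flip: mult.assoc)
  next
    case same
    then have tail: "tail k = s k * tail (k + 1)" using i by (simp add: upt_conv_Cons)
    have "s i * (tail k * tconj a) = (s k * s k) * tail (k + 1) * tconj a"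
      using same tail by (simp add: mult.assoc)
    also have "\<dots> = qdiff * (tail k * tconj a) + tail (k + 1) * tconj a"
      using s_quadratic[of k] same i tail by (simp add: algebra_simps)
    finally show ?thesis
      using lin_span_add[OF lin_span_scale[OF tail_tconj_in_span[OF k] qdiff_coeff]
                            tail_tconj_in_span[of "k + 1"]] same i
      by (simp add: qdiff_def)
  qed
qed

lemma t_mult_gen_in_span:
  assumes k: "1 \<le> k" "k \<le> n"
  shows "t * (tail k * tconj a) \<in> gen_span"
proof (cases "k = 1")
  case True
  have "t * (cox * tconj a) = cox * tconj (a + 1)"
    using tpow_cox[of a] tpow_cox[of "a + 1"] zpow_add_one[OF t_ti ti_t, of a]
    by (simp add: mult.assoc)
  then show ?thesis using True tail_tconj_in_span[of 1] k by simp
next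
  case False
  then have k2: "2 \<le> k" and n2: "2 \<le> n" using k by auto
  have "t * tail k = tail k * t" by (rule prod_list_commute) (use k2 t_s_commute in auto)
  then have "t * (tail k * tconj a) = tail k * (t * tconj a)" by (simp flip: mult.assoc)
  also have "\<dots> = qdiff * (tail k * (cox * tconj 1 * (sprod_inv [1..<n-1] * tpow a)))
                 + tail k * tconj a * t
                 - qdiff * (tail k * (cox * tconj (a + 1) * sprod_inv [1..<n-1]))"
    unfolding t_mult_tconj[OF n2]
    by (simp add: right_diff_distrib distrib_left mult.assoc qdiff_central)
  also have "\<dots> \<in> gen_span"
    unfolding qdiff_def
    by (intro lin_span_diff lin_span_add lin_span_scale qdiff_coeff gens_in_span[OF k Wtilde_t]
        tail_cox_tconj_in_span[OF k2 k(2)] Wtilde_mult Wtilde_sprod_inv_cox Wtilde_tpow)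
  finally show ?thesis .
qed

lemma ti_mult_gen_in_span:
  assumes k: "1 \<le> k" "k \<le> n"
  shows "ti * (tail k * tconj a) \<in> gen_span"
proof (cases "k = 1")
  case True
  have "ti * (cox * tconj a) = cox * tconj (a - 1)"
    using tpow_cox[of a] tpow_cox[of "a - 1"] zpow_diff_one[OF t_ti ti_t, of a]
    by (simp add: mult.assoc)
  then show ?thesis using True tail_tconj_in_span[of 1] k by simp
next
  case False
  then have k2: "2 \<le> k" and n2: "2 \<le> n" using k by auto
  have "ti * tail k = tail k * ti"
    by (rule prod_list_commute) (use k2 t_s_commute commute_inverse[OF t_ti ti_t] in auto)
  then have "ti * (tail k * tconj a) = tail k * (ti * tconj a)" by (simp flip: mult.assoc)
  also have "\<dots> = tail k * tconj a * ti
                 + qdiff * (tail k * (cox * tconj a * (sprod_inv [1..<n-1] * ti)))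
                 - qdiff * (tail k * (cox * tconj 0 * (sprod_inv [1..<n-1] * tpow (a - 1))))"
    unfolding ti_mult_tconj[OF n2]
    by (simp add: right_diff_distrib distrib_left mult.assoc qdiff_central)
  also have "\<dots> \<in> gen_span"
    unfolding qdiff_def
    by (intro lin_span_diff lin_span_add lin_span_scale qdiff_coeff gens_in_span[OF k Wtilde_ti]
        tail_cox_tconj_in_span[OF k2 k(2)] Wtilde_mult Wtilde_sprod_inv_cox Wtilde_tpow Wtilde_ti)
  finally show ?thesis .
qed

lemma gen_span_UNIV:
  assumes "1 \<le> n"
  shows "gen_span = UNIV"
proof -
  have "alg_gen \<phi> (coeffA m) ({t, ti} \<union> s ` {1..<n}) \<subseteq> gen_span"
  proof (rule alg_gen_subset_lin_span)
    show "1 \<in> gen_span" using tail_tconj_in_span[of n 0] assms by (simp add: tconj_zero)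
  next
    fix g x assume "g \<in> {t, ti} \<union> s ` {1..<n}" and x: "x \<in> gen_span"
    then consider "g = t" | "g = ti" | i where "g = s i" "1 \<le> i" "i \<le> n - 1" by auto
    then show "g * x \<in> gen_span"
    proof cases
      case 1 then show ?thesis using gen_span_mult_left[OF t_mult_gen_in_span x] by simp
    next
      case 2 then show ?thesis using gen_span_mult_left[OF ti_mult_gen_in_span x] by simp
    next
      case (3 i) then show ?thesis using gen_span_mult_left[OF s_mult_gen_in_span x, of i] by simp
    qed
  qed
  then show ?thesis using generated by blast
qed

lemma tpow_in_expE_span:
  assumes "m > 0"
  shows "tpow a \<in> lin_span \<phi> (coeffA m) {tpow b | b. b \<in> expE m}"
proof (cases "m = \<infinity>")
  case True then show ?thesis by (intro lin_span_base) (auto simp: expE_def)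
next
  case False
  then obtain k where m: "m = enat k" by auto
  with assms have k: "1 \<le> k" by (simp add: Suc_le_eq zero_enat_def)
  let ?l = "map lvar [1..<k+1]"
  have "tpow a \<in> pow_span t (length ?l)"
  proof (rule zpow_in_pow_span[OF t_ti ti_t])
    show "?l \<noteq> []" using k by simp
    show l_coeff: "\<forall>a\<in>set ?l. a \<in> coeffA m" using m by (auto intro!: coeffA_lvar)
    show "prod_list (map (\<lambda>a. t - \<phi> a) ?l) = 0" using t_root False m by (simp add: o_def)
    show inv_coeff: "prod_list (map uminus (map lvar_inv [1..<k+1])) \<in> coeffA m"
      using m by (intro prod_uminus_mem) (auto intro!: coeffA_lvar_inv)
    show "\<phi> (prod_list (map uminus ?l)) * \<phi> (prod_list (map uminus (map lvar_inv [1..<k+1]))) = 1"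
      by (simp only: phi_mult[OF prod_uminus_mem[OF l_coeff] inv_coeff, symmetric]
          prod_uminus_lvar_inverse phi_one)
  qed
  moreover have "{t ^ j | j. j < length ?l} \<subseteq> lin_span \<phi> (coeffA m) {tpow b | b. b \<in> expE m}"
  proof (intro subsetI lin_span_base)
    fix x assume "x \<in> {t ^ j | j. j < length ?l}"
    then obtain j where "x = t ^ j" "j < k" by (auto simp del: upt_Suc)
    moreover have "t ^ j = tpow (int j)" by (simp add: zpow_def)
    ultimately show "x \<in> {tpow b | b. b \<in> expE m}" using m by (auto simp: expE_def)
  qed
  ultimately show ?thesis unfolding pow_span_def by (rule lin_span_subset_trans)
qed

definition normal_forms :: "'r set" where
  "normal_forms = {prod_list (map (\<lambda>i. ring_inv (s i)) (rev [1..<j+1])) * tpow \<alpha> * cox * w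
                   | j \<alpha> w. j < n \<and> \<alpha> \<in> expE m \<and> w \<in> Wtilde}"

lemma gens_subset_normal_forms:
  assumes "m > 0"
  shows "gens \<subseteq> lin_span \<phi> (coeffA m) normal_forms"
proof
  fix b assume "b \<in> gens"
  then obtain k a w where b: "b = tail k * tconj a * w" and k: "1 \<le> k" "k \<le> n" and w: "w \<in> Wtilde"
    unfolding gens_def by blast
  have "[1..<n] = [1..<k] @ [k..<n]" using upt_add_eq_append[of 1 k "n - k"] k by simp
  then have "tail k * cox_inv = sprod_inv [1..<k]"
    using sprod_upt_inverse(1)[OF k(1) order.refl] by (simp flip: mult.assoc)
  then have b_eq: "b = sprod_inv [1..<k] * (tpow a * (cox * w))"
    unfolding b tconj_def by (simp add: mult.assoc flip: mult.assoc[of "tail k"])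
  have inv: "prod_list (map (\<lambda>i. ring_inv (s i)) (rev [1..<(k - 1) + 1])) = sprod_inv [1..<k]"
  proof -
    have "map (\<lambda>i. ring_inv (s i)) (rev [1..<k]) = map s_inv (rev [1..<k])"
      using k by (intro map_cong) (auto intro!: ring_inv_s)
    moreover have "k - 1 + 1 = k" using k by simp
    ultimately show ?thesis by (simp only:)
  qed
  have "tpow a * (cox * w) \<in> lin_span \<phi> (coeffA m) {tpow \<beta> * (cox * w) | \<beta>. \<beta> \<in> expE m}"
    using tpow_in_expE_span[OF assms]
    by (rule lin_span_mult_right) (auto intro: lin_span_base)
  then show "b \<in> lin_span \<phi> (coeffA m) normal_forms"
    unfolding b_eq
  proof (rule lin_span_mult_left)
    fix x assume "x \<in> {tpow \<beta> * (cox * w) | \<beta>. \<beta> \<in> expE m}"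
    then obtain \<beta> where "x = tpow \<beta> * (cox * w)" "\<beta> \<in> expE m" by blast
    then have "sprod_inv [1..<k] * x \<in> normal_forms"
      unfolding normal_forms_def using k w inv[symmetric]
      by (intro CollectI exI[of _ "k - 1"] exI[of _ \<beta>] exI[of _ w]) (simp add: mult.assoc)
    then show "sprod_inv [1..<k] * x \<in> lin_span \<phi> (coeffA m) normal_forms" by (rule lin_span_base)
  qed
qed

end

theorem mainTheorem2:
  fixes m :: enat and n :: nat
    and \<phi> :: "laurent \<Rightarrow> 'r::ring_1" and t ti :: 'r and s :: "nat \<Rightarrow> 'r"
  assumes "m > 0" and "n \<ge> 1"
    and "is_H m n \<phi> t ti s"
  shows "\<forall>x. x \<in> lin_span \<phi> (coeffA m)
           {prod_list (map (\<lambda>i. ring_inv (s i)) (rev [1..<j+1])) * zpow t ti \<alpha>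
              * prod_list (map s [1..<n]) * w
            | j \<alpha> w. j < n \<and> \<alpha> \<in> expE m
                 \<and> w \<in> alg_gen \<phi> (coeffA m) ({t, ti} \<union> s ` {1..<n-1})}"
proof -
  interpret hecke m n \<phi> t ti s by (rule hecke.intro) (fact assms(3))
  have "x \<in> lin_span \<phi> (coeffA m) normal_forms" for x
    using gen_span_UNIV[OF assms(2)] gens_subset_normal_forms[OF assms(1)]
    by (blast intro: lin_span_subset_trans)
  then show ?thesis unfolding normal_forms_def Wtilde_def by blast
qed

end
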